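(* Let $s\in(0,1)$, let $\Sigma\subset\mathbb{S}^{n-1}$ be measurable with $|\Sigma|>0$, and let $K:\mathbb{S}^{n-1}\to[0,1]$ be measurable with $\eta:=\inf_\Sigma K>0$. Let $\overline r>0$. Then there exists $c=c(n,s,\Sigma,\overline r)>0$ such that for all $R,R'>0$ with $RR'\ge\overline r$ and all $\xi\in\mathbb{R}^n\setminus B(0,R')$, \[ \int_{B(0,R)}\frac{1-\cos(2\xi\cdot h)}{|h|^{n+2s}}K(h/|h|)\,dh\ge c\,\eta\,|\xi|^{2s}. \] If $R=+\infty$ and $R'=0$, this holds with $\overline r=1$. In particular, there is $c=c(n,s,\Sigma)>0$ such that for every $k\in\mathbb{Z}^n$, \[ \int_{\mathbb{T}^n}\big(1-\cos(2\pi\langle k,h\rangle)\big)\sum_{m\in\mathbb{Z}^n}\frac{K\big(\frac{h+m}{|h+m|}\big)}{|h+m|^{n+2s}}\,dh\ge c\,\eta\,|k|^{2s}. \]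
   Context: $\mathbb{T}^n$ denotes the cube $[-\frac12,\frac12]^n$ (with opposite faces identified); $|\Sigma|$ is surface measure on $\mathbb{S}^{n-1}$. *)

theory Defs
  imports "HOL-Analysis.Analysis"
begin

definition sphere_cone :: "'a::real_normed_vector set \<Rightarrow> 'a set" where
  "sphere_cone S = {t *\<^sub>R x | t x. 0 < t \<and> t \<le> 1 \<and> x \<in> S}"

text \<open>Measurability on the sphere (w.r.t. surface measure) and surface measure
  itself, via the standard cone construction: |S| = n * Leb(cone S).\<close>
definition sphere_measurable :: "(real ^ 'n) set \<Rightarrow> bool" where
  "sphere_measurable S \<longleftrightarrow> S \<subseteq> sphere 0 1 \<and> sphere_cone S \<in> sets lebesgue"

definition surface_measure :: "(real ^ 'n) set \<Rightarrow> real" where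
  "surface_measure S = real CARD('n) * measure lebesgue (sphere_cone S)"

definition int_lattice :: "(real ^ 'n) set" where
  "int_lattice = {m. \<forall>i. m $ i \<in> \<int>}"

definition unit_cube :: "(real ^ 'n) set" where
  "unit_cube = {h. \<forall>i. - (1/2) \<le> h $ i \<and> h $ i \<le> 1/2}"

end

theory Submission
  imports Defs
begin

(* Restrict the integral to the dilated cone (rho / |xi|) cone(Sigma) with rho <= 1/2. There
   |2 xi.h| <= 1, so 1 - cos (2 xi.h) >= (xi.h)^2, while the kernel is at least
   (|xi| / rho)^(n + 2s) eta. A change of variables turns the remaining integral of (xi.h)^2
   into |xi|^-(n+2) rho^(n+2) times the second moment Q(xi) = int_{cone Sigma} (xi.u)^2 du,
   and Q is positive definite because cone Sigma has positive measure while hyperplanes are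
   null. With m > 0 the minimum of Q on the unit sphere, homogeneity leaves
   m rho^(2-2s) eta |xi|^(2s). The truncated integral only needs rho / |xi| < R; for the
   periodised kernel take xi = pi k, rho = 1/2 and keep only the summand of the lattice point 0. *)

lemma one_minus_cos_ge_sq_div_4:
  fixes y :: real assumes "\<bar>y\<bar> \<le> 1" shows "y\<^sup>2 / 4 \<le> 1 - cos y"
proof -
  obtain t where "cos y = (\<Sum>m<4. cos_coeff m * y ^ m) + cos (t + 2 * pi) / 24 * y ^ 4"
    using Maclaurin_cos_expansion[of y 4] by (auto simp: fact_numeral)
  then have "cos y = 1 - y\<^sup>2 / 2 + cos t * y ^ 4 / 24"
    by (simp add: cos_coeff_def lessThan_nat_numeral fact_numeral)
  moreover have "cos t * y ^ 4 \<le> y ^ 4"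
    using mult_right_mono[OF cos_le_one, of "y ^ 4" t] by (simp add: zero_le_even_power)
  moreover have "y ^ 4 \<le> y\<^sup>2"
    using power_decreasing[of 2 4 "\<bar>y\<bar>"] assms by simp
  ultimately show ?thesis
    using zero_le_power2[of y] by linarith
qed

lemma nn_integral_lebesgue_scaleR:
  fixes f :: "'a::euclidean_space \<Rightarrow> ennreal"
  assumes [measurable]: "f \<in> borel_measurable lebesgue" and "c \<noteq> 0"
  shows "(\<integral>\<^sup>+x. f x \<partial>lebesgue) = ennreal (\<bar>c\<bar> ^ DIM('a)) * (\<integral>\<^sup>+x. f (c *\<^sub>R x) \<partial>lebesgue)"
proof -
  have "lebesgue = density (distr lebesgue lebesgue (\<lambda>x::'a. c *\<^sub>R x)) (\<lambda>_. ennreal (\<bar>c\<bar> ^ DIM('a)))"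
    using lebesgue_affine_euclidean[of "\<lambda>_::'a. c" 0] \<open>c \<noteq> 0\<close>
    unfolding scaleR_scaleR[symmetric] scaleR_sum_right[symmetric] euclidean_representation
    by (simp add: prod_constant)
  then have "(\<integral>\<^sup>+x. f x \<partial>lebesgue)
      = (\<integral>\<^sup>+x. f x \<partial>density (distr lebesgue lebesgue (\<lambda>x. c *\<^sub>R x)) (\<lambda>_. ennreal (\<bar>c\<bar> ^ DIM('a))))"
    by (rule arg_cong)
  also have "\<dots> = ennreal (\<bar>c\<bar> ^ DIM('a)) * (\<integral>\<^sup>+x. f (c *\<^sub>R x) \<partial>lebesgue)"
    by (simp add: nn_integral_density nn_integral_distr nn_integral_cmult)
  finally show ?thesis .
qed

lemma integrable_inner_mult_inner_indicator:
  fixes C :: "'a::euclidean_space set"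
  assumes "C \<in> sets lebesgue" "bounded C"
  shows "integrable lebesgue (\<lambda>u. (a \<bullet> u) * (b \<bullet> u) * indicator C u)"
proof -
  obtain B where "B > 0" and B: "\<And>u. u \<in> C \<Longrightarrow> norm u \<le> B"
    using \<open>bounded C\<close> by (auto simp: bounded_pos)
  have inner_le: "\<bar>v \<bullet> u\<bar> \<le> norm v * B" if "u \<in> C" for v u
    using Cauchy_Schwarz_ineq2[of v u] mult_left_mono[OF B[OF that], of "norm v"] by simp
  have "\<bar>(a \<bullet> u) * (b \<bullet> u)\<bar> \<le> (norm a * B) * (norm b * B)" if "u \<in> C" for u
    unfolding abs_mult using inner_le[OF that] \<open>B > 0\<close> by (intro mult_mono) auto
  then have "integrable lebesgue (\<lambda>u. indicator C u *\<^sub>R ((a \<bullet> u) * (b \<bullet> u)))"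
    using assms bounded_set_imp_lmeasurable[OF assms(2,1)]
    by (intro integrableI_bounded_set_indicator[where B = "(norm a * B) * (norm b * B)"])
       (auto simp: fmeasurable_def intro: measurable_completion)
  then show ?thesis by (simp add: mult.commute)
qed

definition second_moment :: "'a::euclidean_space set \<Rightarrow> 'a \<Rightarrow> real" where
  "second_moment C \<xi> = (\<integral>u. (\<xi> \<bullet> u)\<^sup>2 * indicator C u \<partial>lebesgue)"

lemma second_moment_eq_sum:
  fixes C :: "'a::euclidean_space set"
  assumes "C \<in> sets lebesgue" "bounded C"
  shows "second_moment C \<xi> = (\<Sum>i\<in>Basis. \<Sum>j\<in>Basis.
            (\<xi> \<bullet> i) * (\<xi> \<bullet> j) * (\<integral>u. (i \<bullet> u) * (j \<bullet> u) * indicator C u \<partial>lebesgue))"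
proof -
  have "(\<xi> \<bullet> u)\<^sup>2 = (\<Sum>i\<in>Basis. \<Sum>j\<in>Basis. (\<xi> \<bullet> i) * (\<xi> \<bullet> j) * ((i \<bullet> u) * (j \<bullet> u)))" for u
    unfolding euclidean_inner[of \<xi> u] power2_eq_square sum_product by (simp add: inner_commute mult_ac)
  then have "(\<xi> \<bullet> u)\<^sup>2 * indicator C u
      = (\<Sum>i\<in>Basis. \<Sum>j\<in>Basis. (\<xi> \<bullet> i) * (\<xi> \<bullet> j) * ((i \<bullet> u) * (j \<bullet> u) * indicator C u))" for u
    by (simp add: sum_distrib_right mult.assoc)
  then show ?thesis
    unfolding second_moment_def using integrable_inner_mult_inner_indicator[OF assms]
    by (simp add: Bochner_Integration.integral_sum integrable_sum)
qed

lemma continuous_second_moment: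
  fixes C :: "'a::euclidean_space set"
  assumes "C \<in> sets lebesgue" "bounded C"
  shows "continuous_on A (second_moment C)"
  unfolding second_moment_eq_sum[OF assms, abs_def] by (intro continuous_intros)

lemma second_moment_scaleR: "second_moment C (a *\<^sub>R \<xi>) = a\<^sup>2 * second_moment C \<xi>"
  unfolding second_moment_def by (simp add: power_mult_distrib mult.assoc)

lemma second_moment_pos:
  fixes C :: "'a::euclidean_space set"
  assumes C: "C \<in> sets lebesgue" "bounded C" and "0 < measure lebesgue C" and "\<xi> \<noteq> 0"
  shows "0 < second_moment C \<xi>"
proof (rule ccontr)
  assume "\<not> 0 < second_moment C \<xi>"
  moreover have "0 \<le> second_moment C \<xi>"
    unfolding second_moment_def by (intro integral_nonneg_AE AE_I2) auto
  ultimately have "second_moment C \<xi> = 0" by simp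
  then have "AE u in lebesgue. (\<xi> \<bullet> u)\<^sup>2 * indicator C u = 0"
    using integral_nonneg_eq_0_iff_AE[OF integrable_inner_mult_inner_indicator[OF C, of \<xi> \<xi>]]
    by (simp add: second_moment_def power2_eq_square)
  moreover have "AE u in lebesgue. \<xi> \<bullet> u \<noteq> 0"
    using negligible_hyperplane[of \<xi> 0] \<open>\<xi> \<noteq> 0\<close>
    by (intro AE_not_in[of "{u. \<xi> \<bullet> u = 0}", simplified]) (simp add: negligible_iff_null_sets)
  ultimately have "AE u in lebesgue. u \<notin> C"
    by eventually_elim (auto split: split_indicator)
  then have "emeasure lebesgue C = 0"
    using AE_iff_measurable[OF C(1), of "\<lambda>u. u \<notin> C"] by simp
  then show False
    using \<open>0 < measure lebesgue C\<close> by (simp add: measure_def)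
qed

lemma second_moment_ge_sq_norm:
  fixes C :: "'a::euclidean_space set"
  assumes C: "C \<in> sets lebesgue" "bounded C" and "0 < measure lebesgue C"
  obtains m where "0 < m" "\<And>\<xi>. m * (norm \<xi>)\<^sup>2 \<le> second_moment C \<xi>"
proof -
  obtain e where e: "e \<in> sphere 0 1" and e_min: "\<And>u. u \<in> sphere 0 1 \<Longrightarrow> second_moment C e \<le> second_moment C u"
    using continuous_attains_inf[OF compact_sphere[of 0 1] _ continuous_second_moment[OF C]] by auto
  have "second_moment C e * (norm \<xi>)\<^sup>2 \<le> second_moment C \<xi>" for \<xi>
  proof (cases "\<xi> = 0")
    case False
    have "second_moment C \<xi> = second_moment C (norm \<xi> *\<^sub>R (\<xi> /\<^sub>R norm \<xi>))"
      using False by simp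
    also have "\<dots> = (norm \<xi>)\<^sup>2 * second_moment C (\<xi> /\<^sub>R norm \<xi>)"
      by (rule second_moment_scaleR)
    finally have scale: "second_moment C \<xi> = (norm \<xi>)\<^sup>2 * second_moment C (\<xi> /\<^sub>R norm \<xi>)" .
    have "second_moment C e \<le> second_moment C (\<xi> /\<^sub>R norm \<xi>)"
      using False by (intro e_min) simp
    then show ?thesis
      unfolding scale by (metis mult.commute mult_left_mono zero_le_power2)
  qed (simp add: second_moment_def)
  moreover have "0 < second_moment C e"
    using e by (intro second_moment_pos[OF C \<open>0 < measure lebesgue C\<close>]) auto
  ultimately show ?thesis using that by blast
qed

lemma nn_integral_dilated_second_moment:
  fixes C :: "'a::euclidean_space set"
  assumes C: "C \<in> sets lebesgue" "bounded C" and "0 < c" "0 \<le> B"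
  shows "(\<integral>\<^sup>+h. ennreal (B * ((\<xi> \<bullet> h)\<^sup>2 * indicator C (c *\<^sub>R h))) \<partial>lebesgue)
           = ennreal (B * (second_moment C \<xi> / c ^ (DIM('a) + 2)))"
proof -
  have [measurable]: "C \<in> sets lebesgue" "(\<lambda>u. (\<xi> \<bullet> u)\<^sup>2) \<in> borel_measurable lebesgue"
    using C by (auto intro: measurable_completion)
  have "(\<integral>\<^sup>+h. ennreal (B * ((\<xi> \<bullet> h)\<^sup>2 * indicator C (c *\<^sub>R h))) \<partial>lebesgue)
      = ennreal B * (\<integral>\<^sup>+h. ennreal ((\<xi> \<bullet> h)\<^sup>2 * indicator C (c *\<^sub>R h)) \<partial>lebesgue)"
    using \<open>0 \<le> B\<close> by (simp add: nn_integral_cmult[symmetric] ennreal_mult'[symmetric])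
  also have "(\<integral>\<^sup>+h. ennreal ((\<xi> \<bullet> h)\<^sup>2 * indicator C (c *\<^sub>R h)) \<partial>lebesgue)
      = ennreal (\<bar>1 / c\<bar> ^ DIM('a))
          * (\<integral>\<^sup>+x. ennreal ((\<xi> \<bullet> ((1 / c) *\<^sub>R x))\<^sup>2 * indicator C (c *\<^sub>R ((1 / c) *\<^sub>R x))) \<partial>lebesgue)"
    using \<open>0 < c\<close> by (intro nn_integral_lebesgue_scaleR) auto
  also have "(\<lambda>x. ennreal ((\<xi> \<bullet> ((1 / c) *\<^sub>R x))\<^sup>2 * indicator C (c *\<^sub>R ((1 / c) *\<^sub>R x))))
      = (\<lambda>x. ennreal ((\<xi> \<bullet> x) * (\<xi> \<bullet> x) * indicator C x / c\<^sup>2))"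
    using \<open>0 < c\<close> by (simp add: power2_eq_square)
  also have "(\<integral>\<^sup>+x. ennreal ((\<xi> \<bullet> x) * (\<xi> \<bullet> x) * indicator C x / c\<^sup>2) \<partial>lebesgue)
      = ennreal (second_moment C \<xi> / c\<^sup>2)"
    unfolding second_moment_def using integrable_inner_mult_inner_indicator[OF C, of \<xi> \<xi>]
    by (subst nn_integral_eq_integral) (auto simp: power2_eq_square)
  also have "ennreal B * (ennreal (\<bar>1 / c\<bar> ^ DIM('a)) * ennreal (second_moment C \<xi> / c\<^sup>2))
      = ennreal (B * (second_moment C \<xi> / c ^ (DIM('a) + 2)))"
    using \<open>0 < c\<close> \<open>0 \<le> B\<close>
    by (simp add: ennreal_mult'[symmetric] power_add power_one_over power2_eq_square mult_ac)
  finally show ?thesis .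
qed

lemma sphere_cone_subset_cball: "S \<subseteq> sphere 0 1 \<Longrightarrow> sphere_cone S \<subseteq> cball 0 1"
  unfolding sphere_cone_def by auto

lemma sphere_measurable_cone:
  fixes \<Sigma> :: "(real^'n) set"
  assumes "sphere_measurable \<Sigma>"
  shows "\<Sigma> \<subseteq> sphere 0 1" "sphere_cone \<Sigma> \<in> sets lebesgue" "bounded (sphere_cone \<Sigma>)"
  using assms bounded_subset[OF bounded_cball sphere_cone_subset_cball]
  unfolding sphere_measurable_def by auto

lemma kernel_ge_on_dilated_cone:
  fixes \<xi> h :: "'a::real_inner"
  assumes "S \<subseteq> sphere 0 1" "\<forall>x\<in>S. \<eta> \<le> K x" "0 \<le> \<eta>" "0 \<le> p" "0 < c" "norm \<xi> \<le> c / 2"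
    and "c *\<^sub>R h \<in> sphere_cone S"
  shows "h \<noteq> 0" "norm h \<le> 1 / c"
    and "c powr p * \<eta> * (\<xi> \<bullet> h)\<^sup>2 \<le> (1 - cos (2 * (\<xi> \<bullet> h))) / norm h powr p * K (h /\<^sub>R norm h)"
proof -
  obtain t x where tx: "c *\<^sub>R h = t *\<^sub>R x" "0 < t" "t \<le> 1" "x \<in> S"
    using \<open>c *\<^sub>R h \<in> sphere_cone S\<close> unfolding sphere_cone_def by blast
  have "norm x = 1" using tx(4) \<open>S \<subseteq> sphere 0 1\<close> by auto
  have h: "h = (t / c) *\<^sub>R x"
    using arg_cong[OF tx(1), of "scaleR (1 / c)"] \<open>0 < c\<close> by simp
  then have norm_h: "norm h = t / c" and direction: "h /\<^sub>R norm h = x"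
    using \<open>norm x = 1\<close> \<open>0 < c\<close> \<open>0 < t\<close> by auto
  then show "h \<noteq> 0" "norm h \<le> 1 / c"
    using \<open>0 < c\<close> tx(2,3) by (auto simp: divide_right_mono)
  have "\<bar>\<xi> \<bullet> h\<bar> \<le> (c / 2) * (1 / c)"
    using \<open>norm h \<le> 1 / c\<close> \<open>norm \<xi> \<le> c / 2\<close> \<open>0 < c\<close>
    by (intro order_trans[OF Cauchy_Schwarz_ineq2 mult_mono]) auto
  then have "(\<xi> \<bullet> h)\<^sup>2 \<le> 1 - cos (2 * (\<xi> \<bullet> h))"
    using one_minus_cos_ge_sq_div_4[of "2 * (\<xi> \<bullet> h)"] \<open>0 < c\<close> by (simp add: power_mult_distrib)
  moreover have "c powr p \<le> 1 / norm h powr p"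
  proof -
    have "norm h powr p \<le> (1 / c) powr p"
      using \<open>norm h \<le> 1 / c\<close> \<open>0 \<le> p\<close> by (intro powr_mono2) auto
    then show ?thesis
      using \<open>h \<noteq> 0\<close> \<open>0 < c\<close> by (simp add: powr_divide field_simps)
  qed
  moreover have "\<eta> \<le> K x" using tx(4) assms(2) by blast
  ultimately have "c powr p * \<eta> * (\<xi> \<bullet> h)\<^sup>2 \<le> (1 / norm h powr p) * K x * (1 - cos (2 * (\<xi> \<bullet> h)))"
    using \<open>0 \<le> \<eta>\<close> by (intro mult_mono) auto
  then show "c powr p * \<eta> * (\<xi> \<bullet> h)\<^sup>2 \<le> (1 - cos (2 * (\<xi> \<bullet> h))) / norm h powr p * K (h /\<^sub>R norm h)"
    by (simp add: direction mult_ac)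
qed

lemma powr_dilation_identity:
  fixes a \<rho> :: real
  assumes "0 < a" "0 < \<rho>"
  shows "(a / \<rho>) powr (real n + 2 * s) * \<eta> * (m * a\<^sup>2 / (a / \<rho>) ^ (n + 2))
           = m * \<rho> powr (2 - 2 * s) * \<eta> * a powr (2 * s)"
proof -
  define c where "c = a / \<rho>"
  have "0 < c" using assms by (simp add: c_def)
  have "c powr (real n + 2 * s) = c ^ n * c powr (2 * s)"
    using \<open>0 < c\<close> by (simp add: powr_add powr_realpow)
  also have "c powr (2 * s) = a powr (2 * s) / \<rho> powr (2 * s)"
    using assms by (simp add: c_def powr_divide)
  finally have c_powr: "c powr (real n + 2 * s) = c ^ n * (a powr (2 * s) / \<rho> powr (2 * s))" .
  have c_power: "c ^ (n + 2) = c ^ n * (a\<^sup>2 / \<rho>\<^sup>2)"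
    by (simp add: c_def power_add power_divide[of a \<rho> 2] power2_eq_square)
  have \<rho>_powr: "\<rho> powr (2 - 2 * s) = \<rho>\<^sup>2 / \<rho> powr (2 * s)"
    using assms by (simp add: powr_diff powr_realpow[of \<rho> 2, simplified])
  show ?thesis
    unfolding c_def[symmetric] c_powr c_power \<rho>_powr using \<open>0 < c\<close> assms by (simp add: field_simps)
qed

lemma kernel_integral_lower_bound:
  fixes \<Sigma> :: "(real^'n) set" and F :: "real^'n \<Rightarrow> ennreal"
  assumes \<Sigma>: "sphere_measurable \<Sigma>"
    and m: "\<And>\<xi>. m * (norm \<xi>)\<^sup>2 \<le> second_moment (sphere_cone \<Sigma>) \<xi>"
    and \<eta>: "\<forall>x\<in>\<Sigma>. \<eta> \<le> K x" "0 \<le> \<eta>" and \<rho>: "0 < \<rho>" "\<rho> \<le> 1/2" and "0 \<le> s"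
    and F: "\<And>h. h \<noteq> 0 \<Longrightarrow> norm h \<le> \<rho> / norm \<xi> \<Longrightarrow>
      ennreal ((1 - cos (2 * (\<xi> \<bullet> h))) / norm h powr (real CARD('n) + 2 * s) * K (h /\<^sub>R norm h)) \<le> F h"
  shows "ennreal (m * \<rho> powr (2 - 2 * s) * \<eta> * norm \<xi> powr (2 * s)) \<le> (\<integral>\<^sup>+h. F h \<partial>lebesgue)"
proof (cases "\<xi> = 0")
  case False
  define c where "c = norm \<xi> / \<rho>"
  define p where "p = real CARD('n) + 2 * s"
  let ?C = "sphere_cone \<Sigma>"
  note C = sphere_measurable_cone[OF \<Sigma>]
  have "0 < c" "norm \<xi> \<le> c / 2" "\<rho> / norm \<xi> = 1 / c"
    using False \<rho> by (auto simp: c_def field_simps)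
  have "m * \<rho> powr (2 - 2 * s) * \<eta> * norm \<xi> powr (2 * s)
      = c powr p * \<eta> * (m * (norm \<xi>)\<^sup>2 / c ^ (CARD('n) + 2))"
    unfolding c_def p_def using powr_dilation_identity[of "norm \<xi>" \<rho>] False \<rho> by simp
  also have "\<dots> \<le> c powr p * \<eta> * (second_moment ?C \<xi> / c ^ (CARD('n) + 2))"
    using m[of \<xi>] \<open>0 < c\<close> \<eta>(2) by (intro mult_left_mono divide_right_mono) auto
  finally have "ennreal (m * \<rho> powr (2 - 2 * s) * \<eta> * norm \<xi> powr (2 * s))
      \<le> ennreal (c powr p * \<eta> * (second_moment ?C \<xi> / c ^ (CARD('n) + 2)))"
    by (rule ennreal_leI)
  also have "\<dots> = (\<integral>\<^sup>+h. ennreal (c powr p * \<eta> * ((\<xi> \<bullet> h)\<^sup>2 * indicator ?C (c *\<^sub>R h))) \<partial>lebesgue)"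
    using \<eta>(2) by (simp add: nn_integral_dilated_second_moment[OF C(2,3) \<open>0 < c\<close>])
  also have "\<dots> \<le> (\<integral>\<^sup>+h. F h \<partial>lebesgue)"
  proof (intro nn_integral_mono)
    fix h
    show "ennreal (c powr p * \<eta> * ((\<xi> \<bullet> h)\<^sup>2 * indicator ?C (c *\<^sub>R h))) \<le> F h"
    proof (cases "c *\<^sub>R h \<in> ?C")
      case True
      note bound = kernel_ge_on_dilated_cone[OF C(1) \<eta> _ \<open>0 < c\<close> \<open>norm \<xi> \<le> c / 2\<close> True, of p]
      have "0 \<le> p" using \<open>0 \<le> s\<close> by (simp add: p_def)
      with bound True F[of h] \<open>\<rho> / norm \<xi> = 1 / c\<close> show ?thesis
        by (auto simp: p_def intro: order_trans[OF ennreal_leI])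
    qed simp
  qed
  finally show ?thesis .
qed simp

lemma kernel_integral_ball_lower_bound:
  fixes \<Sigma> :: "(real^'n) set"
  assumes \<Sigma>: "sphere_measurable \<Sigma>"
    and m: "\<And>\<xi>. m * (norm \<xi>)\<^sup>2 \<le> second_moment (sphere_cone \<Sigma>) \<xi>"
    and \<eta>: "\<forall>x\<in>\<Sigma>. \<eta> \<le> K x" "0 \<le> \<eta>" and \<rho>: "0 < \<rho>" "\<rho> \<le> 1/2" and "0 \<le> s"
    and R: "\<rho> < R * R'" "0 < R'" "\<xi> \<notin> ball 0 R'"
  shows "ennreal (m * \<rho> powr (2 - 2 * s) * \<eta> * norm \<xi> powr (2 * s))
    \<le> (\<integral>\<^sup>+ h \<in> ball 0 R. ennreal ((1 - cos (2 * (\<xi> \<bullet> h))) / norm h powr (real CARD('n) + 2 * s)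
          * K (h /\<^sub>R norm h)) \<partial>lebesgue)"
proof (rule kernel_integral_lower_bound[OF \<Sigma> m \<eta> \<rho> \<open>0 \<le> s\<close>])
  fix h :: "real^'n"
  assume "norm h \<le> \<rho> / norm \<xi>"
  have "R' \<le> norm \<xi>" using R(3) by simp
  have "0 < R"
    using \<rho>(1) R(1,2) by (metis less_trans zero_less_mult_pos2)
  then have "\<rho> < R * norm \<xi>"
    using R(1) mult_left_mono[OF \<open>R' \<le> norm \<xi>\<close>, of R] by linarith
  moreover have "0 < norm \<xi>" using \<open>R' \<le> norm \<xi>\<close> R(2) by linarith
  ultimately have "\<rho> / norm \<xi> < R" by (simp add: pos_divide_less_eq)
  with \<open>norm h \<le> \<rho> / norm \<xi>\<close> have "norm h < R" by linarith
  then show "ennreal ((1 - cos (2 * (\<xi> \<bullet> h))) / norm h powr (real CARD('n) + 2 * s) * K (h /\<^sub>R norm h))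
      \<le> ennreal ((1 - cos (2 * (\<xi> \<bullet> h))) / norm h powr (real CARD('n) + 2 * s) * K (h /\<^sub>R norm h))
         * indicator (ball 0 R) h"
    by simp
qed

lemma norm_ge_1_if_int_lattice:
  fixes k :: "real^'n"
  assumes "k \<in> int_lattice" "k \<noteq> 0"
  shows "1 \<le> norm k"
proof -
  obtain i where "k $ i \<noteq> 0" using \<open>k \<noteq> 0\<close> by (metis vec_eq_iff zero_index)
  moreover have "k $ i \<in> \<int>" using \<open>k \<in> int_lattice\<close> unfolding int_lattice_def by blast
  ultimately have "1 \<le> \<bar>k $ i\<bar>" by (intro Ints_nonzero_abs_ge1)
  then show ?thesis using component_le_norm_cart[of k i] by linarith
qed

lemma cball_half_subset_unit_cube: "cball 0 (1/2) \<subseteq> (unit_cube :: (real^'n) set)"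
proof
  fix h :: "real^'n"
  assume "h \<in> cball 0 (1/2)"
  then have "- (1/2) \<le> h $ i \<and> h $ i \<le> 1/2" for i
    using component_le_norm_cart[of h i] by (simp add: abs_le_iff)
  then show "h \<in> unit_cube"
    unfolding unit_cube_def by simp
qed

lemma periodized_kernel_integral_lower_bound:
  fixes \<Sigma> :: "(real^'n) set"
  assumes \<Sigma>: "sphere_measurable \<Sigma>"
    and m: "\<And>\<xi>. m * (norm \<xi>)\<^sup>2 \<le> second_moment (sphere_cone \<Sigma>) \<xi>"
    and \<eta>: "\<forall>x\<in>\<Sigma>. \<eta> \<le> K x" "0 \<le> \<eta>" and "0 \<le> s" and k: "k \<in> int_lattice"
  shows "ennreal (m * (1/2) powr (2 - 2 * s) * pi powr (2 * s) * \<eta> * norm k powr (2 * s))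
    \<le> (\<integral>\<^sup>+ h \<in> unit_cube. ennreal (1 - cos (2 * pi * (k \<bullet> h))) *
          (\<integral>\<^sup>+ l. ennreal (K ((h + l) /\<^sub>R norm (h + l)) / norm (h + l) powr (real CARD('n) + 2 * s))
             \<partial>count_space int_lattice) \<partial>lebesgue)"
proof (cases "k = 0")
  case False
  define \<xi> where "\<xi> = pi *\<^sub>R k"
  have "1 \<le> norm \<xi>"
    using norm_ge_1_if_int_lattice[OF k False] pi_gt3 mult_mono[of 1 pi 1 "norm k"]
    by (simp add: \<xi>_def)
  have "ennreal (m * (1/2) powr (2 - 2 * s) * \<eta> * norm \<xi> powr (2 * s))
    \<le> (\<integral>\<^sup>+ h \<in> unit_cube. ennreal (1 - cos (2 * pi * (k \<bullet> h))) *
          (\<integral>\<^sup>+ l. ennreal (K ((h + l) /\<^sub>R norm (h + l)) / norm (h + l) powr (real CARD('n) + 2 * s))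
             \<partial>count_space int_lattice) \<partial>lebesgue)"
  proof (rule kernel_integral_lower_bound[OF \<Sigma> m \<eta> _ _ \<open>0 \<le> s\<close>])
    fix h :: "real^'n"
    assume "norm h \<le> (1/2) / norm \<xi>"
    with \<open>1 \<le> norm \<xi>\<close> have "h \<in> unit_cube"
      using cball_half_subset_unit_cube frac_le[of "1/2" "1/2" 1 "norm \<xi>"] by fastforce
    have "0 \<in> int_lattice" by (simp add: int_lattice_def)
    let ?G = "\<lambda>l. ennreal (K ((h + l) /\<^sub>R norm (h + l)) / norm (h + l) powr (real CARD('n) + 2 * s))"
    have "ennreal ((1 - cos (2 * (\<xi> \<bullet> h))) / norm h powr (real CARD('n) + 2 * s) * K (h /\<^sub>R norm h))
        = ennreal (1 - cos (2 * pi * (k \<bullet> h))) * ?G 0"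
      by (simp add: \<xi>_def ennreal_mult'[symmetric] mult_ac)
    also have "\<dots> \<le> ennreal (1 - cos (2 * pi * (k \<bullet> h))) * (\<integral>\<^sup>+ l. ?G l \<partial>count_space int_lattice)"
      using \<open>0 \<in> int_lattice\<close> by (intro mult_left_mono nn_integral_ge_point) auto
    finally show "ennreal ((1 - cos (2 * (\<xi> \<bullet> h))) / norm h powr (real CARD('n) + 2 * s) * K (h /\<^sub>R norm h))
      \<le> ennreal (1 - cos (2 * pi * (k \<bullet> h))) * (\<integral>\<^sup>+ l. ?G l \<partial>count_space int_lattice) * indicator unit_cube h"
      using \<open>h \<in> unit_cube\<close> by simp
  qed auto
  then show ?thesis
    by (simp add: \<xi>_def powr_mult mult_ac)
qed simp

theorem lemma2p2:
  fixes s :: real and \<Sigma> :: "(real ^ 'n) set"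
  assumes s: "0 < s" "s < 1"
    and \<Sigma>: "sphere_measurable \<Sigma>" "surface_measure \<Sigma> > 0"
  shows
    "(\<forall>rbar > 0. \<exists>c > 0. \<forall>K :: real ^ 'n \<Rightarrow> real.
        (\<lambda>h. K (h /\<^sub>R norm h)) \<in> borel_measurable lebesgue \<longrightarrow>
        (\<forall>x \<in> sphere 0 1. 0 \<le> K x \<and> K x \<le> 1) \<longrightarrow>
        (INF x\<in>\<Sigma>. K x) > 0 \<longrightarrow>
        (\<forall>R R' (\<xi> :: real ^ 'n). 0 < R \<longrightarrow> 0 < R' \<longrightarrow> R * R' \<ge> rbar \<longrightarrow>
            \<xi> \<notin> ball 0 R' \<longrightarrow>
            (\<integral>\<^sup>+ h \<in> ball 0 R. ennreal ((1 - cos (2 * (\<xi> \<bullet> h))) / norm h powr (real CARD('n) + 2 * s)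
                 * K (h /\<^sub>R norm h)) \<partial>lebesgue)
            \<ge> ennreal (c * (INF x\<in>\<Sigma>. K x) * norm \<xi> powr (2 * s))))
   \<and> (\<exists>c > 0. \<forall>K :: real ^ 'n \<Rightarrow> real.
        (\<lambda>h. K (h /\<^sub>R norm h)) \<in> borel_measurable lebesgue \<longrightarrow>
        (\<forall>x \<in> sphere 0 1. 0 \<le> K x \<and> K x \<le> 1) \<longrightarrow>
        (INF x\<in>\<Sigma>. K x) > 0 \<longrightarrow>
        (\<forall>\<xi> :: real ^ 'n.
            (\<integral>\<^sup>+ h. ennreal ((1 - cos (2 * (\<xi> \<bullet> h))) / norm h powr (real CARD('n) + 2 * s)
                 * K (h /\<^sub>R norm h)) \<partial>lebesgue)
            \<ge> ennreal (c * (INF x\<in>\<Sigma>. K x) * norm \<xi> powr (2 * s))))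
   \<and> (\<exists>c > 0. \<forall>K :: real ^ 'n \<Rightarrow> real.
        (\<lambda>h. K (h /\<^sub>R norm h)) \<in> borel_measurable lebesgue \<longrightarrow>
        (\<forall>x \<in> sphere 0 1. 0 \<le> K x \<and> K x \<le> 1) \<longrightarrow>
        (INF x\<in>\<Sigma>. K x) > 0 \<longrightarrow>
        (\<forall>k \<in> int_lattice.
            (\<integral>\<^sup>+ h \<in> unit_cube. ennreal (1 - cos (2 * pi * (k \<bullet> h))) *
               (\<integral>\<^sup>+ m. ennreal (K ((h + m) /\<^sub>R norm (h + m)) / norm (h + m) powr (real CARD('n) + 2 * s))
                  \<partial>count_space int_lattice) \<partial>lebesgue)
            \<ge> ennreal (c * (INF x\<in>\<Sigma>. K x) * norm k powr (2 * s))))"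
proof -
  have "sphere_cone \<Sigma> \<in> sets lebesgue" "bounded (sphere_cone \<Sigma>)"
    using sphere_measurable_cone[OF \<Sigma>(1)] by auto
  moreover have "0 < measure lebesgue (sphere_cone \<Sigma>)"
    using \<Sigma>(2) by (simp add: surface_measure_def zero_less_mult_iff)
  ultimately obtain m where "0 < m" and m: "\<And>\<xi>. m * (norm \<xi>)\<^sup>2 \<le> second_moment (sphere_cone \<Sigma>) \<xi>"
    using second_moment_ge_sq_norm by blast
  have INF_le: "\<forall>x\<in>\<Sigma>. (INF x\<in>\<Sigma>. K x) \<le> K x"
    if "\<forall>x\<in>sphere 0 1. 0 \<le> K x \<and> K x \<le> 1" for K :: "real^'n \<Rightarrow> real"
    using that sphere_measurable_cone(1)[OF \<Sigma>(1)]
    by (intro ballI cINF_lower bdd_belowI2[where m = 0]) auto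
  show ?thesis
    apply (intro conjI allI impI)
    subgoal for rbar
      by (rule exI[where x = "m * min (1/2) (rbar/2) powr (2 - 2 * s)"])
         (use \<open>0 < m\<close> s in
           \<open>intro conjI allI impI ballI kernel_integral_ball_lower_bound[OF \<Sigma>(1) m INF_le]; auto\<close>)
    subgoal
      by (rule exI[where x = "m * (1/2) powr (2 - 2 * s)"])
         (use \<open>0 < m\<close> s in
           \<open>intro conjI allI impI ballI kernel_integral_lower_bound[OF \<Sigma>(1) m INF_le]; auto\<close>)
    subgoal
      by (rule exI[where x = "m * (1/2) powr (2 - 2 * s) * pi powr (2 * s)"])
         (use \<open>0 < m\<close> s in
           \<open>intro conjI allI impI ballI periodized_kernel_integral_lower_bound[OF \<Sigma>(1) m INF_le]; auto\<close>)
    done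
qed

end
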